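(* Let $f,f':\mathcal D_n^+\to\mathcal D_n^+$ be stable mappings (indexed by $n$) with fixed points $\Delta,\Delta'\in\mathcal D_n^+$, $\Delta=f(\Delta)$ and $\Delta'=f'(\Delta')$. Assume $\Delta'\sim O(1)$, that $f$ is contracting for the stable semi-metric around $\Delta'$ with parameter $\lambda<1$ (i.e. $d_s(f(\Delta''),f(\Delta'))\le\lambda\,d_s(\Delta'',\Delta')$ for all $\Delta''\in\mathcal D_n^+$), and that $$1-\lambda-\left\|\sqrt{\frac{|f(\Delta')-f'(\Delta')|}{\Delta'}}\right\|\ge O(1).$$ Then there exists a constant $K\le O(1)$ such that $\|\Delta-\Delta'\|\le K\,\|f(\Delta')-f'(\Delta')\|$.
   Context: All objects are indexed by $n$; $a\le O(b)$ means $a_n\le Kb_n$ for some $K$ independent of $n$, $a\ge O(b)$ means $a_n\ge\kappa b_n$ for some $\kappa>0$ independent of $n$. For $\Delta\in\mathcal D_n^+$ (diagonal $n\times n$ matrices with positive diagonal entries), $\Delta\sim O(1)$ means $\|\Delta\|\le O(1)$ and $\|\Delta^{-1}\|\le O(1)$; $\|\cdot\|$ is the spectral norm, operations on diagonal matrices are entrywise. $d_s(\Delta,\Delta')=\max_i\frac{|\Delta_i-\Delta'_i|}{\sqrt{\Delta_i\Delta'_i}}$; $f$ is stable if $d_s(f(\Delta),f(\Delta'))\le d_s(\Delta,\Delta')$ for all $\Delta,\Delta'$. *)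

theory Defs
  imports Complex_Main
begin

text \<open>A positive diagonal n x n matrix is represented by its diagonal,
  a function nat => real, positive on indices i < n and zero elsewhere.\<close>
definition pos_diag :: "nat \<Rightarrow> (nat \<Rightarrow> real) set" where
  "pos_diag n = {x. (\<forall>i<n. 0 < x i) \<and> (\<forall>i\<ge>n. x i = 0)}"

text \<open>Spectral norm of a diagonal matrix = max absolute diagonal entry.\<close>
definition dnorm :: "nat \<Rightarrow> (nat \<Rightarrow> real) \<Rightarrow> real" where
  "dnorm n x = Max (insert 0 {\<bar>x i\<bar> | i. i < n})"

definition ds :: "nat \<Rightarrow> (nat \<Rightarrow> real) \<Rightarrow> (nat \<Rightarrow> real) \<Rightarrow> real" where
  "ds n a b = Max (insert 0 {\<bar>a i - b i\<bar> / sqrt (a i * b i) | i. i < n})"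

definition stable_map :: "nat \<Rightarrow> ((nat \<Rightarrow> real) \<Rightarrow> (nat \<Rightarrow> real)) \<Rightarrow> bool" where
  "stable_map n f \<longleftrightarrow> (\<forall>x\<in>pos_diag n. f x \<in> pos_diag n) \<and>
     (\<forall>x\<in>pos_diag n. \<forall>y\<in>pos_diag n. ds n (f x) (f y) \<le> ds n x y)"

end

theory Submission
  imports Defs
begin

text \<open>Write \<delta>(a,b) = |a - b| / sqrt(a b), so that d_s is the maximum of \<delta> over the
  diagonal entries. With p = sqrt(a/b) one has \<delta>(a,b) = |p - 1/p|, and the identity
  pq - 1/(pq) = ((p - 1/p)(q + 1/q) + (p + 1/p)(q - 1/q))/2 gives the quasi-triangle inequality
  \<delta>(a,c) \<le> \<delta>(a,b) + \<delta>(b,c) + \<delta>(a,b) \<delta>(b,c).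
  Apply it entrywise to a = \<Delta>, b = f(\<Delta>'), c = \<Delta>' = f'(\<Delta>'). Contraction gives
  \<delta>(a,b) \<le> \<lambda> d_s(\<Delta>,\<Delta>'). With E = \<parallel>sqrt(|b - c| / c)\<parallel> the entries of b lie within a factor
  1 \<plusminus> E^2 of those of c, whence \<lambda> \<delta>(b,c) \<le> E and \<delta>(b,c) \<le> O(\<parallel>b - c\<parallel>). So
  \<kappa> d_s(\<Delta>,\<Delta>') \<le> (1 - \<lambda> - E) d_s(\<Delta>,\<Delta>') \<le> O(\<parallel>b - c\<parallel>), and since \<Delta>' \<sim> O(1) this bound on
  d_s(\<Delta>,\<Delta>') turns into one on \<parallel>\<Delta> - \<Delta>'\<parallel>.\<close>

definition stable_dist :: "real \<Rightarrow> real \<Rightarrow> real" where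
  "stable_dist a b = \<bar>a - b\<bar> / sqrt (a * b)"

lemma stable_dist_nonneg: "0 < a \<Longrightarrow> 0 < b \<Longrightarrow> 0 \<le> stable_dist a b"
  by (simp add: stable_dist_def)

lemma stable_dist_sqrt_ratio:
  assumes "0 < a" "0 < b"
  shows "stable_dist a b = \<bar>sqrt a / sqrt b - inverse (sqrt a / sqrt b)\<bar>"
proof -
  have "a - b = (sqrt a / sqrt b - sqrt b / sqrt a) * (sqrt a * sqrt b)"
    using assms by (simp add: field_simps)
  then show ?thesis
    using assms by (simp add: stable_dist_def real_sqrt_mult abs_mult)
qed

lemma add_inverse_le_abs_diff_inverse:
  fixes p :: real
  assumes "0 < p"
  shows "p + inverse p \<le> 2 + \<bar>p - inverse p\<bar>"
proof (cases "1 \<le> p")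
  case True
  then have "inverse p \<le> 1" by (simp add: inverse_le_1_iff)
  then show ?thesis using True by linarith
next
  case False
  then have "1 \<le> inverse p" using assms by (simp add: one_le_inverse_iff)
  then show ?thesis using False by linarith
qed

lemma stable_dist_triangle:
  assumes "0 < a" "0 < b" "0 < c"
  shows "stable_dist a c \<le> stable_dist a b + stable_dist b c + stable_dist a b * stable_dist b c"
proof -
  define p q where "p = sqrt a / sqrt b" and "q = sqrt b / sqrt c"
  define P Q where "P = \<bar>p - inverse p\<bar>" and "Q = \<bar>q - inverse q\<bar>"
  have pos: "0 < p" "0 < q" using assms by (simp_all add: p_def q_def)
  have ac: "sqrt a / sqrt c = p * q" using assms by (simp add: p_def q_def)
  have "2 * (p * q - inverse (p * q))
      = (p - inverse p) * (q + inverse q) + (p + inverse p) * (q - inverse q)"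
    using pos by (simp add: field_simps)
  moreover have "\<bar>q + inverse q\<bar> = q + inverse q" "\<bar>p + inverse p\<bar> = p + inverse p"
    using pos by (simp_all add: add_pos_pos)
  ultimately have "2 * \<bar>p * q - inverse (p * q)\<bar> \<le> P * (q + inverse q) + (p + inverse p) * Q"
    unfolding P_def Q_def by (metis abs_mult abs_numeral abs_triangle_ineq)
  then have "stable_dist a c \<le> (P * (q + inverse q) + (p + inverse p) * Q) / 2"
    using assms by (simp add: stable_dist_sqrt_ratio ac)
  also have "\<dots> \<le> (P * (2 + Q) + (2 + P) * Q) / 2"
  proof -
    have "p + inverse p \<le> 2 + P" "q + inverse q \<le> 2 + Q"
      using pos by (simp_all add: P_def Q_def add_inverse_le_abs_diff_inverse)
    moreover have "0 \<le> P" "0 \<le> Q" by (simp_all add: P_def Q_def)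
    ultimately show ?thesis by (simp add: add_mono mult_left_mono mult_right_mono)
  qed
  finally show ?thesis
    using assms by (simp add: stable_dist_sqrt_ratio p_def q_def P_def Q_def algebra_simps)
qed

lemma stable_dist_close_le:
  fixes b c e :: real
  assumes "0 < b" "0 < c" "0 \<le> e" "e \<le> 1" and close: "\<bar>b - c\<bar> \<le> e\<^sup>2 * c"
  shows "(1 - e) * stable_dist b c \<le> \<bar>b - c\<bar> / c"
proof -
  have "(c * (1 - e))\<^sup>2 \<le> c * (1 - e\<^sup>2) * c"
    using assms by (simp add: power2_eq_square algebra_simps mult_left_le)
  also have "\<dots> \<le> b * c"
    using close assms by (intro mult_right_mono) (auto simp: algebra_simps abs_le_iff)
  finally have sqrt_ge: "c * (1 - e) \<le> sqrt (b * c)"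
    by (rule real_le_rsqrt)
  show ?thesis
  proof (cases "e < 1")
    case True
    then have "(1 - e) * \<bar>b - c\<bar> / sqrt (b * c) \<le> (1 - e) * \<bar>b - c\<bar> / (c * (1 - e))"
      using sqrt_ge assms by (intro divide_left_mono) auto
    with True show ?thesis by (simp add: stable_dist_def)
  qed (use assms in simp)
qed

lemma stable_dist_contraction_step:
  fixes a b c lam E \<kappa> M C D :: real
  assumes pos: "0 < a" "0 < b" "0 < c" "0 \<le> lam" "0 \<le> E" "0 < \<kappa>" "0 \<le> D"
    and gap: "lam + E \<le> 1 - \<kappa>"
    and close: "\<bar>b - c\<bar> \<le> E\<^sup>2 * c" and M: "\<bar>b - c\<bar> \<le> M" and C: "1 / c \<le> C"
    and contr: "stable_dist a b \<le> lam * D"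
  shows "stable_dist a c \<le> (lam + E) * D + M * C / \<kappa>"
proof -
  define Q where "Q = stable_dist b c"
  have Q0: "0 \<le> Q" using pos by (simp add: Q_def stable_dist_nonneg)
  have E1: "E \<le> 1" using gap pos by linarith
  have close_Q: "(1 - E) * Q \<le> \<bar>b - c\<bar> / c"
    unfolding Q_def using pos(2,3,5) E1 close by (rule stable_dist_close_le)
  have "lam * Q \<le> (1 - E) * Q" using gap pos Q0 by (intro mult_right_mono) auto
  also have "\<dots> \<le> E\<^sup>2"
    using close_Q close pos by (meson order_trans pos_divide_le_eq)
  also have "\<dots> \<le> E" using E1 pos by (simp add: power2_eq_square mult_left_le)
  finally have lam_Q: "lam * Q \<le> E" .
  have "\<kappa> * Q \<le> (1 - E) * Q" using gap pos Q0 by (intro mult_right_mono) auto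
  also have "\<dots> \<le> M * (1 / c)" using close_Q divide_right_mono[OF M, of c] pos by simp
  also have "\<dots> \<le> M * C" using C M by (intro mult_left_mono) auto
  finally have M_Q: "Q \<le> M * C / \<kappa>" using pos by (simp add: field_simps)
  have "stable_dist a c \<le> stable_dist a b + Q + stable_dist a b * Q"
    unfolding Q_def using pos(1-3) by (rule stable_dist_triangle)
  also have "\<dots> \<le> lam * D + Q + lam * D * Q"
    using contr Q0 by (intro add_mono mult_right_mono) auto
  also have "\<dots> \<le> lam * D + M * C / \<kappa> + D * E"
  proof -
    have "lam * D * Q = D * (lam * Q)" by simp
    also have "\<dots> \<le> D * E" using lam_Q pos by (simp add: mult_left_mono)
    finally show ?thesis using M_Q by linarith
  qed
  finally show ?thesis by (simp add: algebra_simps)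
qed

lemma abs_diff_le_stable_dist:
  fixes a c D :: real
  assumes "0 < a" "0 < c" and D: "stable_dist a c \<le> D"
  shows "\<bar>a - c\<bar> \<le> D * (D + 1) * c"
proof -
  define x z where "x = sqrt a" and "z = sqrt c"
  have pos: "0 < x" "0 < z" using assms by (simp_all add: x_def z_def)
  have ac: "a = x\<^sup>2" "c = z\<^sup>2" using assms by (simp_all add: x_def z_def)
  have D0: "0 \<le> D" using D stable_dist_nonneg[OF assms(1,2)] by linarith
  have ac_le: "\<bar>a - c\<bar> \<le> D * (x * z)"
    using D pos by (simp add: stable_dist_def x_def z_def real_sqrt_mult divide_le_eq)
  have "a - c = (x - z) * (x + z)" by (simp add: ac power2_eq_square algebra_simps)
  then have "\<bar>x - z\<bar> * (x + z) = \<bar>a - c\<bar>" using pos by (simp add: abs_mult)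
  also note ac_le
  also have "D * (x * z) \<le> D * z * (x + z)"
    using pos D0 by (simp add: mult_left_mono algebra_simps)
  finally have "\<bar>x - z\<bar> * (x + z) \<le> D * z * (x + z)" .
  then have "\<bar>x - z\<bar> \<le> D * z" using pos by simp
  then have "x * z \<le> (D + 1) * z * z"
    using pos by (intro mult_right_mono) (auto simp: abs_le_iff algebra_simps)
  with ac_le have "\<bar>a - c\<bar> \<le> D * ((D + 1) * z * z)"
    using D0 by (meson mult_left_mono order_trans)
  then show ?thesis using ac by (simp add: power2_eq_square algebra_simps)
qed

lemma abs_le_dnorm: "i < n \<Longrightarrow> \<bar>x i\<bar> \<le> dnorm n x"
  unfolding dnorm_def by (rule Max_ge) (auto simp: setcompr_eq_image)

lemma dnorm_nonneg: "0 \<le> dnorm n x"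
  unfolding dnorm_def by (rule Max_ge) (auto simp: setcompr_eq_image)

lemma dnorm_leI: "0 \<le> M \<Longrightarrow> (\<And>i. i < n \<Longrightarrow> \<bar>x i\<bar> \<le> M) \<Longrightarrow> dnorm n x \<le> M"
  unfolding dnorm_def by (subst Max_le_iff) (auto simp: setcompr_eq_image)

lemma stable_dist_le_ds: "i < n \<Longrightarrow> stable_dist (a i) (b i) \<le> ds n a b"
  unfolding ds_def stable_dist_def by (rule Max_ge) (auto simp: setcompr_eq_image)

lemma ds_nonneg: "0 \<le> ds n a b"
  unfolding ds_def by (rule Max_ge) (auto simp: setcompr_eq_image)

lemma ds_leI: "0 \<le> M \<Longrightarrow> (\<And>i. i < n \<Longrightarrow> stable_dist (a i) (b i) \<le> M) \<Longrightarrow> ds n a b \<le> M"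
  unfolding ds_def stable_dist_def by (subst Max_le_iff) (auto simp: setcompr_eq_image)

lemma pos_diagD: "x \<in> pos_diag n \<Longrightarrow> i < n \<Longrightarrow> 0 < x i"
  by (simp add: pos_diag_def)

lemma abs_le_dnorm_sqrt_ratio:
  assumes "i < n" "0 < c i"
  shows "\<bar>x i\<bar> \<le> (dnorm n (\<lambda>i. sqrt (\<bar>x i\<bar> / c i)))\<^sup>2 * c i"
proof -
  have "sqrt (\<bar>x i\<bar> / c i) \<le> dnorm n (\<lambda>i. sqrt (\<bar>x i\<bar> / c i))"
    using abs_le_dnorm[OF assms(1), of "\<lambda>i. sqrt (\<bar>x i\<bar> / c i)"] by simp
  then have "\<bar>x i\<bar> / c i \<le> (dnorm n (\<lambda>i. sqrt (\<bar>x i\<bar> / c i)))\<^sup>2"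
    using assms(2) by (simp add: real_sqrt_le_iff sqrt_le_D)
  then show ?thesis using assms(2) by (simp add: pos_divide_le_eq)
qed

lemma ds_le_of_contraction_gap:
  fixes a b c :: "nat \<Rightarrow> real"
  assumes a: "a \<in> pos_diag n" and b: "b \<in> pos_diag n" and c: "c \<in> pos_diag n"
    and lam: "0 \<le> lam" and \<kappa>: "0 < \<kappa>"
    and contr: "ds n a b \<le> lam * ds n a c"
    and inv_c: "dnorm n (\<lambda>i. 1 / c i) \<le> C"
    and gap: "1 - lam - dnorm n (\<lambda>i. sqrt (\<bar>b i - c i\<bar> / c i)) \<ge> \<kappa>"
  shows "ds n a c \<le> C * dnorm n (\<lambda>i. b i - c i) / \<kappa>\<^sup>2"
proof -
  define E where "E = dnorm n (\<lambda>i. sqrt (\<bar>b i - c i\<bar> / c i))"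
  define M where "M = dnorm n (\<lambda>i. b i - c i)"
  define D where "D = ds n a c"
  have C: "0 \<le> C" using inv_c dnorm_nonneg order_trans by blast
  have "D \<le> (lam + E) * D + M * C / \<kappa>"
    unfolding D_def
  proof (rule ds_leI)
    show "0 \<le> (lam + E) * ds n a c + M * C / \<kappa>"
      using lam \<kappa> C by (simp add: E_def M_def dnorm_nonneg ds_nonneg)
  next
    fix i assume i: "i < n"
    have "\<bar>b i - c i\<bar> \<le> E\<^sup>2 * c i"
      unfolding E_def using i c by (intro abs_le_dnorm_sqrt_ratio) (auto simp: pos_diagD)
    moreover have "\<bar>b i - c i\<bar> \<le> M"
      unfolding M_def using abs_le_dnorm[OF i, of "\<lambda>i. b i - c i"] by simp
    moreover have "1 / c i \<le> C"
      using abs_le_dnorm[OF i, of "\<lambda>i. 1 / c i"] inv_c pos_diagD[OF c i] by simp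
    moreover have "stable_dist (a i) (b i) \<le> lam * ds n a c"
      using stable_dist_le_ds[OF i] contr by (rule order_trans)
    ultimately show "stable_dist (a i) (c i) \<le> (lam + E) * ds n a c + M * C / \<kappa>"
      using i a b c lam \<kappa> gap
      by (intro stable_dist_contraction_step) (auto simp: pos_diagD E_def dnorm_nonneg ds_nonneg)
  qed
  moreover have "\<kappa> * D \<le> (1 - lam - E) * D"
    using gap ds_nonneg[of n a c] by (intro mult_right_mono) (simp_all add: E_def D_def)
  ultimately have "\<kappa> * D \<le> M * C / \<kappa>"
    by (simp add: algebra_simps)
  then show ?thesis
    using \<kappa> by (simp add: D_def M_def field_simps power2_eq_square)
qed

lemma dnorm_diff_le_of_ds:
  fixes a c :: "nat \<Rightarrow> real"
  assumes a: "a \<in> pos_diag n" and c: "c \<in> pos_diag n"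
    and D: "ds n a c \<le> D" and C: "dnorm n c \<le> C"
  shows "dnorm n (\<lambda>i. a i - c i) \<le> D * (D + 1) * C"
proof (rule dnorm_leI)
  have "0 \<le> D" "0 \<le> C"
    using D C ds_nonneg dnorm_nonneg order_trans by blast+
  then show "0 \<le> D * (D + 1) * C" by simp
  fix i assume i: "i < n"
  have "\<bar>a i - c i\<bar> \<le> D * (D + 1) * c i"
    using order_trans[OF stable_dist_le_ds[OF i] D] a c i
    by (intro abs_diff_le_stable_dist) (auto simp: pos_diagD)
  also have "\<dots> \<le> D * (D + 1) * C"
    using abs_le_dnorm[OF i, of c] C \<open>0 \<le> D\<close> by (intro mult_left_mono) auto
  finally show "\<bar>a i - c i\<bar> \<le> D * (D + 1) * C" .
qed

lemma fixed_point_perturbation_bound: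
  fixes a b c :: "nat \<Rightarrow> real"
  assumes a: "a \<in> pos_diag n" and b: "b \<in> pos_diag n" and c: "c \<in> pos_diag n"
    and lam: "0 \<le> lam" and \<kappa>: "0 < \<kappa>"
    and contr: "ds n a b \<le> lam * ds n a c"
    and C: "dnorm n c \<le> C" and inv_c: "dnorm n (\<lambda>i. 1 / c i) \<le> C"
    and gap: "1 - lam - dnorm n (\<lambda>i. sqrt (\<bar>b i - c i\<bar> / c i)) \<ge> \<kappa>"
  shows "dnorm n (\<lambda>i. a i - c i) \<le> C\<^sup>2 * (C\<^sup>2 / \<kappa>\<^sup>2 + 1) / \<kappa>\<^sup>2 * dnorm n (\<lambda>i. b i - c i)"
proof -
  define M where "M = dnorm n (\<lambda>i. b i - c i)"
  define D where "D = C * M / \<kappa>\<^sup>2"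
  have C0: "0 \<le> C" using C dnorm_nonneg order_trans by blast
  have M0: "0 \<le> M" by (simp add: M_def dnorm_nonneg)
  have "M \<le> C"
    unfolding M_def
  proof (rule dnorm_leI[OF C0])
    fix i assume i: "i < n"
    have "dnorm n (\<lambda>i. sqrt (\<bar>b i - c i\<bar> / c i)) \<le> 1"
      using gap lam \<kappa> by linarith
    then have "(dnorm n (\<lambda>i. sqrt (\<bar>b i - c i\<bar> / c i)))\<^sup>2 * c i \<le> c i"
      using pos_diagD[OF c i] by (intro mult_left_le_one_le) (auto simp: dnorm_nonneg power_le_one)
    then show "\<bar>b i - c i\<bar> \<le> C"
      using abs_le_dnorm_sqrt_ratio[of i n c "\<lambda>i. b i - c i"] i pos_diagD[OF c i]
        abs_le_dnorm[OF i, of c] C by linarith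
  qed
  then have D_le: "D \<le> C\<^sup>2 / \<kappa>\<^sup>2"
    using C0 \<kappa> by (simp add: D_def power2_eq_square divide_right_mono mult_left_mono)
  have "dnorm n (\<lambda>i. a i - c i) \<le> D * (D + 1) * C"
    using a c C ds_le_of_contraction_gap[OF a b c lam \<kappa> contr inv_c gap]
    by (intro dnorm_diff_le_of_ds) (simp_all add: D_def M_def)
  also have "\<dots> \<le> D * (C\<^sup>2 / \<kappa>\<^sup>2 + 1) * C"
    using D_le C0 M0 by (intro mult_right_mono mult_left_mono) (auto simp: D_def)
  also have "\<dots> = C\<^sup>2 * (C\<^sup>2 / \<kappa>\<^sup>2 + 1) / \<kappa>\<^sup>2 * M"
    by (simp add: D_def power2_eq_square)
  finally show ?thesis by (simp add: M_def)
qed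

lemma contraction_factor_nonneg:
  assumes "0 < n" and c: "c \<in> pos_diag n"
    and contr: "\<forall>D\<in>pos_diag n. ds n (f D) (f c) \<le> lam * ds n D c"
  shows "0 \<le> lam"
proof -
  define D where "D = (\<lambda>i. 2 * c i)"
  have "D \<in> pos_diag n" using c by (simp add: D_def pos_diag_def)
  then have "0 \<le> lam * ds n D c" using contr ds_nonneg order_trans by blast
  moreover have "0 < stable_dist (D 0) (c 0)"
    using pos_diagD[OF c \<open>0 < n\<close>] by (simp add: D_def stable_dist_def)
  then have "0 < ds n D c" using stable_dist_le_ds[OF \<open>0 < n\<close>] by (rule less_le_trans)
  ultimately show ?thesis by (simp add: zero_le_mult_iff)
qed

theorem theorem6:
  fixes f f' :: "nat \<Rightarrow> (nat \<Rightarrow> real) \<Rightarrow> (nat \<Rightarrow> real)"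
    and \<Delta> \<Delta>' :: "nat \<Rightarrow> nat \<Rightarrow> real"
    and lam :: "nat \<Rightarrow> real"
  assumes stab: "\<forall>n\<ge>1. stable_map n (f n) \<and> stable_map n (f' n)"
    and fix1: "\<forall>n\<ge>1. \<Delta> n \<in> pos_diag n \<and> f n (\<Delta> n) = \<Delta> n"
    and fix2: "\<forall>n\<ge>1. \<Delta>' n \<in> pos_diag n \<and> f' n (\<Delta>' n) = \<Delta>' n"
    and bdd: "\<exists>C. \<forall>n\<ge>1. dnorm n (\<Delta>' n) \<le> C \<and> dnorm n (\<lambda>i. 1 / \<Delta>' n i) \<le> C"
    and lam_lt: "\<forall>n\<ge>1. lam n < 1"
    and contr: "\<forall>n\<ge>1. \<forall>D\<in>pos_diag n.
                  ds n (f n D) (f n (\<Delta>' n)) \<le> lam n * ds n D (\<Delta>' n)"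
    and gap: "\<exists>\<kappa>>0. \<forall>n\<ge>1.
       1 - lam n - dnorm n (\<lambda>i. sqrt (\<bar>f n (\<Delta>' n) i - f' n (\<Delta>' n) i\<bar> / \<Delta>' n i)) \<ge> \<kappa>"
  shows "\<exists>K :: nat \<Rightarrow> real. (\<exists>B. \<forall>n\<ge>1. K n \<le> B) \<and>
     (\<forall>n\<ge>1. dnorm n (\<lambda>i. \<Delta> n i - \<Delta>' n i)
               \<le> K n * dnorm n (\<lambda>i. f n (\<Delta>' n) i - f' n (\<Delta>' n) i))"
proof -
  obtain C where C: "\<forall>n\<ge>1. dnorm n (\<Delta>' n) \<le> C \<and> dnorm n (\<lambda>i. 1 / \<Delta>' n i) \<le> C"
    using bdd by blast
  obtain \<kappa> where \<kappa>: "\<kappa> > 0" and gap_n: "\<forall>n\<ge>1.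
      1 - lam n - dnorm n (\<lambda>i. sqrt (\<bar>f n (\<Delta>' n) i - f' n (\<Delta>' n) i\<bar> / \<Delta>' n i)) \<ge> \<kappa>"
    using gap by blast
  define K where "K = C\<^sup>2 * (C\<^sup>2 / \<kappa>\<^sup>2 + 1) / \<kappa>\<^sup>2"
  have "dnorm n (\<lambda>i. \<Delta> n i - \<Delta>' n i) \<le> K * dnorm n (\<lambda>i. f n (\<Delta>' n) i - f' n (\<Delta>' n) i)"
    if n: "n \<ge> 1" for n
  proof -
    have \<Delta>: "\<Delta> n \<in> pos_diag n" "f n (\<Delta> n) = \<Delta> n"
      and \<Delta>': "\<Delta>' n \<in> pos_diag n" "f' n (\<Delta>' n) = \<Delta>' n"
      using fix1 fix2 n by auto
    have f\<Delta>': "f n (\<Delta>' n) \<in> pos_diag n"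
      using stab n \<Delta>' unfolding stable_map_def by blast
    have lam: "0 \<le> lam n"
      using contraction_factor_nonneg[OF _ \<Delta>'(1)] contr n by auto
    have contr_n: "ds n (\<Delta> n) (f n (\<Delta>' n)) \<le> lam n * ds n (\<Delta> n) (\<Delta>' n)"
      using contr n \<Delta> by metis
    have gap_n': "1 - lam n - dnorm n (\<lambda>i. sqrt (\<bar>f n (\<Delta>' n) i - \<Delta>' n i\<bar> / \<Delta>' n i)) \<ge> \<kappa>"
      using gap_n[rule_format, OF n] by (simp add: \<Delta>'(2))
    show ?thesis
      using fixed_point_perturbation_bound[OF \<Delta>(1) f\<Delta>' \<Delta>'(1) lam \<kappa> contr_n _ _ gap_n'] C n
      by (simp add: K_def \<Delta>'(2))
  qed
  then show ?thesis by (intro exI[of _ "\<lambda>_. K"]) auto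
qed

end
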